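(* Let $\mathbf{k}=\mathbb{R}$ or $\mathbb{C}$, let $(C^\bullet,\partial)$ be a complex of finite-dimensional $\mathbf{k}$-vector spaces of odd length $d=2r-1$, and let $\Gamma_t$, $t\in\mathbb{R}$, be a smooth family of chirality operators on $C^\bullet$. Then \[ \frac{d}{dt}\rho_{\Gamma_t}=\frac12\operatorname{Tr}_s(\dot\Gamma_t\circ\Gamma_t)\cdot\rho_{\Gamma_t}, \] where $\rho_{\Gamma_t}$ is regarded as a smooth curve in the fixed line $\operatorname{Det}(H^\bullet(\partial))$.
   Context: $\dot\Gamma_t$ is the $t$-derivative of $\Gamma_t$; $\dot\Gamma_t\circ\Gamma_t$ maps each $C^k$ to itself, and $\operatorname{Tr}_s(\dot\Gamma_t\circ\Gamma_t):=\sum_{j=0}^d(-1)^j\operatorname{Tr}(\dot\Gamma_t\circ\Gamma_t|_{C^j})$. Determinant lines: $\operatorname{Det}(V)=\Lambda^{\dim V}V$, $\operatorname{Det}(0)=\mathbf{k}$, $L^{-1}=\operatorname{Hom}(L,\mathbf{k})$, $l^{-1}(l)=1$, $\operatorname{Det}(V^\bullet)=\bigotimes_j\operatorname{Det}(V^j)^{(-1)^j}$; $\mu_{V_1,\dots,V_r}$ is the fusion isomorphism concatenating wedges. The isomorphism $\phi_{C^\bullet}:\operatorname{Det}(C^\bullet)\to\operatorname{Det}(H^\bullet(\partial))$: choose $C^j=B^j\oplus H^j\oplus A^j$ with $B^j\oplus H^j=\operatorname{Ker}\partial\cap C^j$, $B^j=\partial(A^{j-1})=\partial(C^{j-1})$,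 $A^{-1}=A^d=0$; for nonzero $c_j\in\operatorname{Det}(C^j)$, $a_j\in\operatorname{Det}(A^j)$ ($a_{-1}=1$), $h_j\in\operatorname{Det}(H^j)\cong\operatorname{Det}(H^j(\partial))$ is unique with $c_j=\mu_{B^j,H^j,A^j}(\partial(a_{j-1})\otimes h_j\otimes a_j)$; $\phi_{C^\bullet}(c_0\otimes c_1^{-1}\otimes\cdots\otimes c_d^{(-1)^d})=(-1)^{\mathcal N}h_0\otimes\cdots\otimes h_d^{(-1)^d}$, $\mathcal N=\frac12\sum_j\dim A^j(\dim A^j+(-1)^{j+1})$. A chirality operator is an involution $\Gamma$ with $\Gamma(C^j)=C^{d-j}$; $c_\Gamma=(-1)^{\mathcal R(C^\bullet)}c_0\otimes c_1^{-1}\otimes\cdots\otimes c_{r-1}^{(-1)^{r-1}}\otimes(\Gamma c_{r-1})^{(-1)^r}\otimes\cdots\otimes(\Gamma c_0)^{-1}$ for nonzero $c_j\in\operatorname{Det}(C^j)$, $j<r$ (independent of the $c_j$), $\mathcal R(C^\bullet)=\frac12\sum_{j=0}^{r-1}\dim C^j(\dim C^j+(-1)^{r+j})$; the refined torsion is $\rho_\Gamma=\phi_{C^\bullet}(c_\Gamma)$. *)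

theory Defs
  imports Complex_Main "Jordan_Normal_Form.Determinant"
begin

text \<open>The complex C^0 -> C^1 -> ... -> C^d is modelled in coordinates:
  C^j = k^(n j) (column vectors of dimension n j), and the differential
  C^j -> C^(j+1) is the matrix D j (for j < d; the differential on C^d is zero).\<close>

definition is_complex :: "nat \<Rightarrow> (nat \<Rightarrow> nat) \<Rightarrow> (nat \<Rightarrow> 'a::field mat) \<Rightarrow> bool" where
  "is_complex d n D \<longleftrightarrow>
     (\<forall>j<d. D j \<in> carrier_mat (n (Suc j)) (n j)) \<and>
     (\<forall>j. Suc j < d \<longrightarrow> D (Suc j) * D j = 0\<^sub>m (n (Suc (Suc j))) (n j))"

definition lspan :: "nat \<Rightarrow> 'a::field vec list \<Rightarrow> 'a vec set" where
  "lspan m vs = {mat_of_cols m vs *\<^sub>v c | c. c \<in> carrier_vec (length vs)}"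

definition ker_sp :: "nat \<Rightarrow> (nat \<Rightarrow> nat) \<Rightarrow> (nat \<Rightarrow> 'a::field mat) \<Rightarrow> nat \<Rightarrow> 'a vec set" where
  "ker_sp d n D j = {v \<in> carrier_vec (n j). j < d \<longrightarrow> D j *\<^sub>v v = 0\<^sub>v (n (Suc j))}"

definition im_sp :: "nat \<Rightarrow> (nat \<Rightarrow> nat) \<Rightarrow> (nat \<Rightarrow> 'a::field mat) \<Rightarrow> nat \<Rightarrow> 'a vec set" where
  "im_sp d n D j = (if j = 0 then {0\<^sub>v (n 0)} else (\<lambda>u. D (j - 1) *\<^sub>v u) ` carrier_vec (n (j - 1)))"

text \<open>Coefficient of v_1 \<and> ... \<and> v_m in Det(k^m) with respect to e_1 \<and> ... \<and> e_m.\<close>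
definition wedge_coeff :: "nat \<Rightarrow> 'a::field vec list \<Rightarrow> 'a" where
  "wedge_coeff m vs = det (mat_of_cols m vs)"

text \<open>The list of vectors spanning B^j = \<partial>(A^(j-1)): images of the chosen basis of A^(j-1)
  (A^(-1) = 0).\<close>
definition Blist :: "(nat \<Rightarrow> 'a::field mat) \<Rightarrow> (nat \<Rightarrow> 'a vec list) \<Rightarrow> nat \<Rightarrow> 'a vec list" where
  "Blist D a j = (if j = 0 then [] else map (\<lambda>v. D (j - 1) *\<^sub>v v) (a (j - 1)))"

text \<open>Adapted data for the isomorphism phi: z j is a basis of a complement H^j of B^j in
  Ker \<partial> (its classes form the basis of H^j(\<partial>) in which Det(H^\<bullet>(\<partial>)) is expressed), and
  a j is a basis of a complement A^j with C^j = B^j \<oplus> H^j \<oplus> A^j, B^j = \<partial>(A^(j-1)) = \<partial>(C^(j-1)),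
  B^j \<oplus> H^j = Ker \<partial> \<inter> C^j, A^d = 0.\<close>
definition adapted :: "nat \<Rightarrow> (nat \<Rightarrow> nat) \<Rightarrow> (nat \<Rightarrow> 'a::field mat) \<Rightarrow> (nat \<Rightarrow> 'a vec list)
    \<Rightarrow> (nat \<Rightarrow> 'a vec list) \<Rightarrow> bool" where
  "adapted d n D z a \<longleftrightarrow>
     a d = [] \<and>
     (\<forall>j\<le>d. set (z j) \<subseteq> carrier_vec (n j) \<and> set (a j) \<subseteq> carrier_vec (n j) \<and>
        length (Blist D a j @ z j @ a j) = n j \<and>
        det (mat_of_cols (n j) (Blist D a j @ z j @ a j)) \<noteq> 0 \<and>
        lspan (n j) (Blist D a j @ z j) = ker_sp d n D j \<and>
        lspan (n j) (Blist D a j) = im_sp d n D j)"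

text \<open>A chirality operator, given by its blocks \<Gamma>|C^j : C^j -> C^(d-j).\<close>
definition is_chirality :: "nat \<Rightarrow> (nat \<Rightarrow> nat) \<Rightarrow> (nat \<Rightarrow> 'a::field mat) \<Rightarrow> bool" where
  "is_chirality d n G \<longleftrightarrow>
     (\<forall>j\<le>d. G j \<in> carrier_mat (n (d - j)) (n j) \<and> G (d - j) * G j = 1\<^sub>m (n j))"

definition smooth_curve :: "(real \<Rightarrow> 'a::real_normed_vector) \<Rightarrow> bool" where
  "smooth_curve f \<longleftrightarrow>
     (\<exists>Df. Df 0 = f \<and> (\<forall>m t. (Df m has_vector_derivative Df (Suc m) t) (at t)))"

definition vderiv :: "(real \<Rightarrow> 'a::real_normed_vector) \<Rightarrow> real \<Rightarrow> 'a" where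
  "vderiv f t = (THE f'. (f has_vector_derivative f') (at t))"

definition mat_deriv :: "(real \<Rightarrow> 'a::real_normed_vector mat) \<Rightarrow> real \<Rightarrow> 'a mat" where
  "mat_deriv M t = mat (dim_row (M t)) (dim_col (M t)) (\<lambda>(i, k). vderiv (\<lambda>s. M s $$ (i, k)) t)"

definition smooth_chirality_family :: "nat \<Rightarrow> (nat \<Rightarrow> nat) \<Rightarrow> (real \<Rightarrow> nat \<Rightarrow> 'a::{real_normed_field} mat) \<Rightarrow> bool" where
  "smooth_chirality_family d n G \<longleftrightarrow>
     (\<forall>t. is_chirality d n (G t)) \<and>
     (\<forall>j\<le>d. \<forall>i<n (d - j). \<forall>k<n j. smooth_curve (\<lambda>t. G t j $$ (i, k)))"

definition mat_trace :: "'a::comm_ring_1 mat \<Rightarrow> 'a" where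
  "mat_trace M = (\<Sum>i<dim_row M. M $$ (i, i))"

text \<open>Supertrace of \<Gamma>' \<circ> \<Gamma>: on C^j it is (\<Gamma>'|C^(d-j)) (\<Gamma>|C^j).\<close>
definition supertrace_dot :: "nat \<Rightarrow> (nat \<Rightarrow> 'a::field mat) \<Rightarrow> (nat \<Rightarrow> 'a mat) \<Rightarrow> 'a" where
  "supertrace_dot d G Gd = (\<Sum>j\<le>d. (-1) ^ j * mat_trace (Gd (d - j) * G j))"

text \<open>Coefficient of c_j in c_\<Gamma> (w.r.t. e_1 \<and> ... \<and> e_(n j)): for j < r, c_j = e_1 \<and> ... ;
  for j \<ge> r the factor is \<Gamma> c_(d-j).\<close>
definition cgamma_coeff :: "nat \<Rightarrow> (nat \<Rightarrow> nat) \<Rightarrow> (nat \<Rightarrow> 'a::field mat) \<Rightarrow> nat \<Rightarrow> 'a" where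
  "cgamma_coeff r n G j =
     (if j < r then wedge_coeff (n j) (unit_vecs (n j))
      else wedge_coeff (n j) (map (\<lambda>v. G (2 * r - 1 - j) *\<^sub>v v) (unit_vecs (n (2 * r - 1 - j)))))"

definition R_exp :: "nat \<Rightarrow> (nat \<Rightarrow> nat) \<Rightarrow> int" where
  "R_exp r n = (\<Sum>j<r. int (n j) * (int (n j) + (-1) ^ (r + j))) div 2"

definition N_exp :: "nat \<Rightarrow> (nat \<Rightarrow> 'a vec list) \<Rightarrow> int" where
  "N_exp d a = (\<Sum>j\<le>d. int (length (a j)) * (int (length (a j)) + (-1) ^ (j + 1))) div 2"

text \<open>h_j = hcoeff j \<cdot> (z_1 \<and> ... \<and> z_h), determined by c_j = \<mu>(\<partial>(a_(j-1)) \<otimes> h_j \<otimes> a_j).\<close>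
definition hcoeff :: "nat \<Rightarrow> (nat \<Rightarrow> nat) \<Rightarrow> (nat \<Rightarrow> 'a::field mat) \<Rightarrow> (nat \<Rightarrow> 'a vec list)
    \<Rightarrow> (nat \<Rightarrow> 'a vec list) \<Rightarrow> (nat \<Rightarrow> 'a mat) \<Rightarrow> nat \<Rightarrow> 'a" where
  "hcoeff r n D z a G j =
     cgamma_coeff r n G j / wedge_coeff (n j) (Blist D a j @ z j @ a j)"

text \<open>Refined torsion \<rho>_\<Gamma> = \<phi>(c_\<Gamma>), expressed as its coordinate in the line Det(H^\<bullet>(\<partial>))
  with respect to the basis  [z_0] \<otimes> [z_1]^(-1) \<otimes> ... \<otimes> [z_d]^(-1), where [z_j] is the wedge
  of the classes of z j; note (x l)^(-1) = x^(-1) l^(-1).\<close>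
definition rho_coord :: "nat \<Rightarrow> (nat \<Rightarrow> nat) \<Rightarrow> (nat \<Rightarrow> 'a::field mat) \<Rightarrow> (nat \<Rightarrow> 'a vec list)
    \<Rightarrow> (nat \<Rightarrow> 'a vec list) \<Rightarrow> (nat \<Rightarrow> 'a mat) \<Rightarrow> 'a" where
  "rho_coord r n D z a G =
     (-1) powi (R_exp r n + N_exp (2 * r - 1) a) *
     (\<Prod>j\<le>2 * r - 1. (if even j then hcoeff r n D z a G j else inverse (hcoeff r n D z a G j)))"

end

theory Submission
  imports Defs
begin

(* Of the factors h_j making up rho_Gamma, those with j < r do not depend on Gamma, while for
   j >= r the factor h_j is det(Gamma|C^(d-j)) divided by a constant fixed by the differential
   and the adapted bases.  By Jacobi's formula the logarithmic derivative of det(Gamma|C^(d-j)) is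
   T_j = Tr(Gamma'|C^(d-j) Gamma|C^j), and h_j enters rho with exponent (-1)^j, so
   rho'/rho = sum_(j >= r) (-1)^j T_j.  Differentiating Gamma|C^j Gamma|C^(d-j) = 1 gives
   T_(d-j) = -T_j; as d is odd, (-1)^j T_j is invariant under j -> d - j, so the sum over j >= r
   is half of the supertrace Tr_s(Gamma' Gamma). *)

section \<open>Derivatives of curves in a normed field\<close>

lemma has_vector_derivative_unique_at:
  fixes f :: "real \<Rightarrow> 'b::real_normed_vector"
  assumes "(f has_vector_derivative f') (at t)" and "(f has_vector_derivative f'') (at t)"
  shows "f' = f''"
proof -
  have "(\<lambda>h. h *\<^sub>R f') = (\<lambda>h. h *\<^sub>R f'')"
    using assms unfolding has_vector_derivative_def by (rule has_derivative_unique)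
  then show ?thesis by (metis scaleR_one)
qed

lemma vderiv_eqI:
  assumes "(f has_vector_derivative f') (at t)"
  shows "vderiv f t = f'"
  unfolding vderiv_def using assms has_vector_derivative_unique_at by blast

lemma smooth_curve_has_vderiv:
  assumes "smooth_curve f"
  shows "(f has_vector_derivative vderiv f t) (at t)"
proof -
  from assms obtain Df where "Df 0 = f" and "\<And>m t. (Df m has_vector_derivative Df (Suc m) t) (at t)"
    unfolding smooth_curve_def by blast
  then have "(f has_vector_derivative Df 1 t) (at t)" by (metis One_nat_def)
  then show ?thesis by (simp add: vderiv_eqI)
qed

lemma has_vector_derivative_prod:
  fixes f :: "'i \<Rightarrow> real \<Rightarrow> 'a::real_normed_field"
  assumes "\<And>i. i \<in> I \<Longrightarrow> (f i has_vector_derivative f' i) (at t)"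
  shows "((\<lambda>s. \<Prod>i\<in>I. f i s) has_vector_derivative (\<Sum>i\<in>I. f' i * (\<Prod>j\<in>I - {i}. f j t))) (at t)"
  using has_derivative_prod[of I f "\<lambda>i h. h *\<^sub>R f' i" t UNIV] assms
  unfolding has_vector_derivative_def by (simp add: scaleR_sum_right)

lemma has_vector_derivative_prod_logarithmic:
  fixes f :: "'i \<Rightarrow> real \<Rightarrow> 'a::real_normed_field"
  assumes "finite I" and "\<And>i. i \<in> I \<Longrightarrow> (f i has_vector_derivative c i * f i t) (at t)"
  shows "((\<lambda>s. \<Prod>i\<in>I. f i s) has_vector_derivative (\<Sum>i\<in>I. c i) * (\<Prod>i\<in>I. f i t)) (at t)"
proof (rule has_vector_derivative_eq_rhs)
  show "((\<lambda>s. \<Prod>i\<in>I. f i s) has_vector_derivative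
      (\<Sum>i\<in>I. c i * f i t * (\<Prod>j\<in>I - {i}. f j t))) (at t)"
    by (rule has_vector_derivative_prod) (rule assms(2))
  show "(\<Sum>i\<in>I. c i * f i t * (\<Prod>j\<in>I - {i}. f j t)) = (\<Sum>i\<in>I. c i) * (\<Prod>i\<in>I. f i t)"
    unfolding sum_distrib_right
    by (intro sum.cong refl) (simp add: prod.remove[OF assms(1)] mult.assoc)
qed

lemma has_vector_derivative_inverse_logarithmic:
  fixes f :: "real \<Rightarrow> 'a::real_normed_field"
  assumes "(f has_vector_derivative c * f t) (at t)" and "f t \<noteq> 0"
  shows "((\<lambda>s. inverse (f s)) has_vector_derivative - c * inverse (f t)) (at t)"
  unfolding has_vector_derivative_def
proof (rule has_derivative_eq_rhs)
  show "((\<lambda>s. inverse (f s)) has_derivative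
      (\<lambda>h. - (inverse (f t) * (h *\<^sub>R (c * f t)) * inverse (f t)))) (at t)"
    using assms unfolding has_vector_derivative_def by (intro has_derivative_inverse) auto
  show "(\<lambda>h. - (inverse (f t) * (h *\<^sub>R (c * f t)) * inverse (f t))) = (\<lambda>h. h *\<^sub>R (- c * inverse (f t)))"
    using assms(2) by (simp add: scaleR_conv_of_real field_simps)
qed

section \<open>Traces and Jacobi's formula\<close>

lemma mat_trace_one: "mat_trace (1\<^sub>m n) = of_nat n"
  by (simp add: mat_trace_def)

lemma mat_trace_mult_eq_sum:
  assumes "A \<in> carrier_mat m k" and "B \<in> carrier_mat k m"
  shows "mat_trace (A * B) = (\<Sum>i<m. \<Sum>j<k. A $$ (i, j) * B $$ (j, i))"
  using assms by (auto simp: mat_trace_def scalar_prod_def lessThan_atLeast0 intro!: sum.cong)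

lemma mat_trace_mult_comm:
  assumes "A \<in> carrier_mat m k" and "B \<in> carrier_mat k m"
  shows "mat_trace (A * B) = mat_trace (B * A)"
  unfolding mat_trace_mult_eq_sum[OF assms] mat_trace_mult_eq_sum[OF assms(2,1)]
  by (subst sum.swap) (simp add: mult.commute)

lemma dim_eq_if_mult_eq_one:
  fixes A :: "'a::{comm_ring_1, ring_char_0} mat"
  assumes "A \<in> carrier_mat m k" and "B \<in> carrier_mat k m"
    and "A * B = 1\<^sub>m m" and "B * A = 1\<^sub>m k"
  shows "m = k"
proof -
  have "(of_nat m :: 'a) = of_nat k"
    using mat_trace_mult_comm[OF assms(1,2)] assms(3,4) by (simp add: mat_trace_one)
  then show ?thesis by simp
qed

lemma has_vector_derivative_mat_trace_mult:
  fixes A B :: "real \<Rightarrow> 'a::real_normed_field mat"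
  assumes "\<And>s. A s \<in> carrier_mat m k" and "\<And>s. B s \<in> carrier_mat k m"
    and "A' \<in> carrier_mat m k" and "B' \<in> carrier_mat k m"
    and "\<And>i j. i < m \<Longrightarrow> j < k \<Longrightarrow> ((\<lambda>s. A s $$ (i, j)) has_vector_derivative A' $$ (i, j)) (at t)"
    and "\<And>i j. i < k \<Longrightarrow> j < m \<Longrightarrow> ((\<lambda>s. B s $$ (i, j)) has_vector_derivative B' $$ (i, j)) (at t)"
  shows "((\<lambda>s. mat_trace (A s * B s)) has_vector_derivative
           mat_trace (A' * B t) + mat_trace (A t * B')) (at t)"
proof -
  have "((\<lambda>s. \<Sum>i<m. \<Sum>j<k. A s $$ (i, j) * B s $$ (j, i)) has_vector_derivative
      (\<Sum>i<m. \<Sum>j<k. A t $$ (i, j) * B' $$ (j, i) + A' $$ (i, j) * B t $$ (j, i))) (at t)"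
    using assms(5,6) by (intro has_vector_derivative_sum has_vector_derivative_mult) auto
  then show ?thesis
    unfolding mat_trace_mult_eq_sum[OF assms(1,2)] mat_trace_mult_eq_sum[OF assms(3) assms(2)]
      mat_trace_mult_eq_sum[OF assms(1) assms(4)]
    by (simp add: sum.distrib add.commute)
qed

lemma det_replace_row:
  fixes A :: "'a::comm_ring_1 mat"
  assumes A: "A \<in> carrier_mat n n" and i: "i < n"
  shows "det (mat n n (\<lambda>(l, k). if l = i then v k else A $$ (l, k))) = (\<Sum>k<n. v k * cofactor A i k)"
proof -
  let ?B = "mat n n (\<lambda>(l, k). if l = i then v k else A $$ (l, k))"
  have "mat_delete ?B i k = mat_delete A i k" for k
    using A i by (intro eq_matI) (auto simp: mat_delete_def)
  then have "cofactor ?B i k = cofactor A i k" for k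
    unfolding cofactor_def by simp
  then show ?thesis
    using laplace_expansion_row[of ?B n i] i by simp
qed

lemma has_vector_derivative_det_rows:
  fixes M :: "real \<Rightarrow> 'a::real_normed_field mat"
  assumes M: "\<And>s. M s \<in> carrier_mat n n"
    and M': "\<And>i k. i < n \<Longrightarrow> k < n \<Longrightarrow> ((\<lambda>s. M s $$ (i, k)) has_vector_derivative M' $$ (i, k)) (at t)"
  shows "((\<lambda>s. det (M s)) has_vector_derivative
           (\<Sum>i<n. det (mat n n (\<lambda>(l, k). if l = i then M' $$ (i, k) else M t $$ (l, k))))) (at t)"
proof -
  define P where "P = {p. p permutes {..<n}}"
  have p_less: "p i < n" if "p \<in> P" "i < n" for p i
    using that permutes_in_image[of p "{..<n}" i] unfolding P_def by simp
  have leibniz: "det (M s) = (\<Sum>p\<in>P. signof p * (\<Prod>i<n. M s $$ (i, p i)))" for s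
    unfolding P_def det_def'[OF M] atLeast0LessThan ..
  have "((\<lambda>s. \<Prod>i<n. M s $$ (i, p i)) has_vector_derivative
      (\<Sum>i<n. M' $$ (i, p i) * (\<Prod>l\<in>{..<n} - {i}. M t $$ (l, p l)))) (at t)" if "p \<in> P" for p
    using that p_less
    by (intro has_vector_derivative_prod[where f = "\<lambda>i s. M s $$ (i, p i)"] M') auto
  then have "((\<lambda>s. det (M s)) has_vector_derivative (\<Sum>p\<in>P. signof p *
      (\<Sum>i<n. M' $$ (i, p i) * (\<Prod>l\<in>{..<n} - {i}. M t $$ (l, p l))))) (at t)"
    unfolding leibniz by (intro has_vector_derivative_sum has_vector_derivative_mult_right)
  moreover
  let ?R = "\<lambda>i. mat n n (\<lambda>(l, k). if l = i then M' $$ (i, k) else M t $$ (l, k))"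
  have "(\<Prod>l<n. ?R i $$ (l, p l)) = M' $$ (i, p i) * (\<Prod>l\<in>{..<n} - {i}. M t $$ (l, p l))"
    if "i < n" "p \<in> P" for i p
    using that p_less by (subst prod.remove[of _ i]) (auto intro!: prod.cong)
  then have "(\<Sum>p\<in>P. signof p * (\<Sum>i<n. M' $$ (i, p i) * (\<Prod>l\<in>{..<n} - {i}. M t $$ (l, p l))))
      = (\<Sum>i<n. \<Sum>p\<in>P. signof p * (\<Prod>l<n. ?R i $$ (l, p l)))"
    by (subst sum.swap) (auto simp: sum_distrib_left intro!: sum.cong)
  also have "\<dots> = (\<Sum>i<n. det (?R i))"
    by (intro sum.cong refl) (simp add: det_def'[of _ n] P_def atLeast0LessThan)
  ultimately show ?thesis by simp
qed

lemma has_vector_derivative_det: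
  fixes M :: "real \<Rightarrow> 'a::real_normed_field mat"
  assumes M: "\<And>s. M s \<in> carrier_mat n n" and "M' \<in> carrier_mat n n"
    and "\<And>i k. i < n \<Longrightarrow> k < n \<Longrightarrow> ((\<lambda>s. M s $$ (i, k)) has_vector_derivative M' $$ (i, k)) (at t)"
  shows "((\<lambda>s. det (M s)) has_vector_derivative mat_trace (M' * adj_mat (M t))) (at t)"
proof -
  have "(\<Sum>i<n. det (mat n n (\<lambda>(l, k). if l = i then M' $$ (i, k) else M t $$ (l, k))))
      = (\<Sum>i<n. \<Sum>k<n. M' $$ (i, k) * cofactor (M t) i k)"
    by (intro sum.cong refl) (simp add: det_replace_row[OF M])
  also have "\<dots> = mat_trace (M' * adj_mat (M t))"
    using assms(2) M[of t] adj_mat(1)[OF M]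
    by (simp add: mat_trace_mult_eq_sum adj_mat_def)
  finally show ?thesis
    using has_vector_derivative_det_rows[OF M assms(3)] by simp
qed

lemma adj_mat_eq_det_smult_inverse:
  fixes A :: "'a::comm_ring_1 mat"
  assumes A: "A \<in> carrier_mat n n" and B: "B \<in> carrier_mat n n" and BA: "B * A = 1\<^sub>m n"
  shows "adj_mat A = det A \<cdot>\<^sub>m B"
proof -
  have adj: "adj_mat A \<in> carrier_mat n n" "A * adj_mat A = det A \<cdot>\<^sub>m 1\<^sub>m n"
    using adj_mat[OF A] by auto
  have "adj_mat A = (B * A) * adj_mat A" using BA adj by simp
  also have "\<dots> = B * (A * adj_mat A)" by (rule assoc_mult_mat[OF B A adj(1)])
  also have "\<dots> = det A \<cdot>\<^sub>m B" using adj B by (simp add: mult_smult_distrib[OF B one_carrier_mat])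
  finally show ?thesis .
qed

lemma has_vector_derivative_det_invertible:
  fixes M :: "real \<Rightarrow> 'a::real_normed_field mat"
  assumes M: "\<And>s. M s \<in> carrier_mat n n" and M': "M' \<in> carrier_mat n n"
    and "\<And>i k. i < n \<Longrightarrow> k < n \<Longrightarrow> ((\<lambda>s. M s $$ (i, k)) has_vector_derivative M' $$ (i, k)) (at t)"
    and N: "N \<in> carrier_mat n n" and "N * M t = 1\<^sub>m n"
  shows "((\<lambda>s. det (M s)) has_vector_derivative mat_trace (M' * N) * det (M t)) (at t)"
proof -
  have "mat_trace (M' * adj_mat (M t)) = mat_trace (M' * N) * det (M t)"
    using M' N unfolding adj_mat_eq_det_smult_inverse[OF M N assms(5)]
    by (simp add: mult_smult_distrib mat_trace_def sum_distrib_left mult_ac)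
  then show ?thesis
    using has_vector_derivative_det[OF M M' assms(3)] by simp
qed

section \<open>Smooth families of chirality operators\<close>

lemma mat_deriv_carrier: "M t \<in> carrier_mat p q \<Longrightarrow> mat_deriv M t \<in> carrier_mat p q"
  by (simp add: mat_deriv_def)

lemma has_vector_derivative_mat_deriv_entry:
  assumes "M t \<in> carrier_mat p q" and "i < p" and "k < q" and "smooth_curve (\<lambda>s. M s $$ (i, k))"
  shows "((\<lambda>s. M s $$ (i, k)) has_vector_derivative mat_deriv M t $$ (i, k)) (at t)"
  using assms smooth_curve_has_vderiv by (simp add: mat_deriv_def)

lemma is_chirality_blocks:
  assumes "is_chirality d n G" and "j \<le> d"
  shows "G j \<in> carrier_mat (n (d - j)) (n j)" and "G (d - j) \<in> carrier_mat (n j) (n (d - j))"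
    and "G (d - j) * G j = 1\<^sub>m (n j)" and "G j * G (d - j) = 1\<^sub>m (n (d - j))"
proof -
  have j': "d - j \<le> d" and jj: "d - (d - j) = j" using assms(2) by auto
  show "G j \<in> carrier_mat (n (d - j)) (n j)" and "G (d - j) * G j = 1\<^sub>m (n j)"
    using assms unfolding is_chirality_def by blast+
  have "G (d - j) \<in> carrier_mat (n (d - (d - j))) (n (d - j))"
    and "G (d - (d - j)) * G (d - j) = 1\<^sub>m (n (d - j))"
    using assms(1) j' unfolding is_chirality_def by blast+
  then show "G (d - j) \<in> carrier_mat (n j) (n (d - j))" and "G j * G (d - j) = 1\<^sub>m (n (d - j))"
    unfolding jj .
qed

lemma chirality_dim_eq:
  fixes G :: "nat \<Rightarrow> 'a::{field, ring_char_0} mat"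
  assumes "is_chirality d n G" and "j \<le> d"
  shows "n (d - j) = n j"
  using dim_eq_if_mult_eq_one is_chirality_blocks[OF assms] by blast

lemma smooth_chirality_family_is_chirality:
  "smooth_chirality_family d n G \<Longrightarrow> is_chirality d n (G s)"
  unfolding smooth_chirality_family_def by blast

lemma smooth_chirality_family_mat_deriv:
  assumes fam: "smooth_chirality_family d n G" and j: "j \<le> d"
  shows "mat_deriv (\<lambda>s. G s j) t \<in> carrier_mat (n (d - j)) (n j)"
    and "\<And>i k. i < n (d - j) \<Longrightarrow> k < n j \<Longrightarrow>
      ((\<lambda>s. G s j $$ (i, k)) has_vector_derivative mat_deriv (\<lambda>s. G s j) t $$ (i, k)) (at t)"
proof -
  have G: "G t j \<in> carrier_mat (n (d - j)) (n j)"
    by (rule is_chirality_blocks(1)[OF smooth_chirality_family_is_chirality[OF fam] j])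
  then show "mat_deriv (\<lambda>s. G s j) t \<in> carrier_mat (n (d - j)) (n j)"
    by (rule mat_deriv_carrier)
  fix i k assume "i < n (d - j)" and "k < n j"
  moreover from this have "smooth_curve (\<lambda>s. G s j $$ (i, k))"
    using fam j unfolding smooth_chirality_family_def by blast
  ultimately show "((\<lambda>s. G s j $$ (i, k)) has_vector_derivative mat_deriv (\<lambda>s. G s j) t $$ (i, k)) (at t)"
    by (rule has_vector_derivative_mat_deriv_entry[where M = "\<lambda>s. G s j", OF G])
qed

lemma smooth_chirality_family_trace_antisym:
  fixes G :: "real \<Rightarrow> nat \<Rightarrow> 'a::real_normed_field mat"
  assumes fam: "smooth_chirality_family d n G" and j: "j \<le> d"
  shows "mat_trace (mat_deriv (\<lambda>s. G s j) t * G t (d - j))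
           = - mat_trace (mat_deriv (\<lambda>s. G s (d - j)) t * G t j)"
proof -
  have jj: "d - (d - j) = j" and j': "d - j \<le> d" using j by auto
  note blocks = is_chirality_blocks[OF smooth_chirality_family_is_chirality[OF fam] j]
  note Gd = smooth_chirality_family_mat_deriv[OF fam j] and
    Gd' = smooth_chirality_family_mat_deriv[OF fam j', unfolded jj]
  have "((\<lambda>s. mat_trace (G s j * G s (d - j))) has_vector_derivative
      mat_trace (mat_deriv (\<lambda>s. G s j) t * G t (d - j)) + mat_trace (G t j * mat_deriv (\<lambda>s. G s (d - j)) t)) (at t)"
    by (rule has_vector_derivative_mat_trace_mult[OF blocks(1,2) Gd(1) Gd'(1) Gd(2) Gd'(2)])
  moreover have "((\<lambda>s. mat_trace (G s j * G s (d - j))) has_vector_derivative 0) (at t)"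
    unfolding blocks(4) by (rule has_vector_derivative_const)
  ultimately have "mat_trace (mat_deriv (\<lambda>s. G s j) t * G t (d - j))
      + mat_trace (G t j * mat_deriv (\<lambda>s. G s (d - j)) t) = 0"
    by (rule has_vector_derivative_unique_at)
  moreover have "mat_trace (G t j * mat_deriv (\<lambda>s. G s (d - j)) t)
      = mat_trace (mat_deriv (\<lambda>s. G s (d - j)) t * G t j)"
    by (rule mat_trace_mult_comm[OF blocks(1) Gd'(1)])
  ultimately show ?thesis
    by (simp only: eq_neg_iff_add_eq_0)
qed

lemma smooth_chirality_family_has_vector_derivative_det:
  fixes G :: "real \<Rightarrow> nat \<Rightarrow> 'a::real_normed_field mat"
  assumes fam: "smooth_chirality_family d n G" and j: "j \<le> d"
  shows "((\<lambda>s. det (G s j)) has_vector_derivative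
           mat_trace (mat_deriv (\<lambda>s. G s j) t * G t (d - j)) * det (G t j)) (at t)"
    and "det (G t j) \<noteq> 0"
proof -
  note chir = smooth_chirality_family_is_chirality[OF fam]
  have sq: "n (d - j) = n j" by (rule chirality_dim_eq[OF chir j])
  note blocks = is_chirality_blocks[OF chir j, unfolded sq]
  note Gd = smooth_chirality_family_mat_deriv[OF fam j, unfolded sq]
  show "((\<lambda>s. det (G s j)) has_vector_derivative
      mat_trace (mat_deriv (\<lambda>s. G s j) t * G t (d - j)) * det (G t j)) (at t)"
    by (rule has_vector_derivative_det_invertible[OF blocks(1) Gd(1) Gd(2) blocks(2,3)])
  have "det (G t (d - j)) * det (G t j) = 1"
    using det_mult[OF blocks(2)[of t] blocks(1)[of t]] blocks(3)[of t] by simp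
  then show "det (G t j) \<noteq> 0" by auto
qed

section \<open>Variation of the refined torsion\<close>

lemma minus_one_power_eq_neg_if_odd_add:
  "odd (a + b) \<Longrightarrow> (-1 :: 'a::ring_1) ^ a = - ((-1) ^ b)"
  by (cases "even b") auto

lemma sum_atMost_eq_twice_upper_half:
  fixes g :: "nat \<Rightarrow> 'a::semiring_1"
  assumes "1 \<le> r" and "\<And>j. j \<le> 2 * r - 1 \<Longrightarrow> g (2 * r - 1 - j) = g j"
  shows "(\<Sum>j\<le>2 * r - 1. g j) = 2 * (\<Sum>j=r..2 * r - 1. g j)"
proof -
  have "(\<Sum>j<r. g j) = (\<Sum>j=r..2 * r - 1. g (2 * r - 1 - j))"
    by (rule sum.reindex_bij_witness[of _ "\<lambda>j. 2 * r - 1 - j" "\<lambda>j. 2 * r - 1 - j"])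
      (use assms(1) in auto)
  also have "\<dots> = (\<Sum>j=r..2 * r - 1. g j)"
    using assms(2) by (intro sum.cong) auto
  finally have lower: "(\<Sum>j<r. g j) = (\<Sum>j=r..2 * r - 1. g j)" .
  have "{..2 * r - 1} = {..<r} \<union> {r..2 * r - 1}"
    using assms(1) by auto
  then have "(\<Sum>j\<le>2 * r - 1. g j) = (\<Sum>j<r. g j) + (\<Sum>j=r..2 * r - 1. g j)"
    by (metis finite_atLeastAtMost finite_lessThan ivl_disj_int_one(4) sum.union_disjoint)
  then show ?thesis
    unfolding lower mult_2 .
qed

lemma supertrace_dot_eq_twice_upper_half:
  fixes G :: "real \<Rightarrow> nat \<Rightarrow> 'a::real_normed_field mat"
  assumes "1 \<le> r" and d: "d = 2 * r - 1" and fam: "smooth_chirality_family d n G"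
  shows "supertrace_dot d (G t) (\<lambda>j. mat_deriv (\<lambda>s. G s j) t)
           = 2 * (\<Sum>j=r..d. (-1) ^ j * mat_trace (mat_deriv (\<lambda>s. G s (d - j)) t * G t j))"
proof -
  let ?g = "\<lambda>j. (-1) ^ j * mat_trace (mat_deriv (\<lambda>s. G s (d - j)) t * G t j)"
  have "?g (d - j) = ?g j" if j: "j \<le> d" for j
  proof -
    have "(-1 :: 'a) ^ (d - j) = - ((-1) ^ j)"
      by (rule minus_one_power_eq_neg_if_odd_add) (use assms(1) d j in auto)
    moreover have "d - (d - j) = j" using j by simp
    ultimately show ?thesis
      using smooth_chirality_family_trace_antisym[OF fam j] by simp
  qed
  then show ?thesis
    unfolding supertrace_dot_def
    using sum_atMost_eq_twice_upper_half[OF assms(1), of ?g, folded d] by blast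
qed

lemma mat_of_cols_unit_vecs: "mat_of_cols n (unit_vecs n) = 1\<^sub>m n"
  by (intro eq_matI) (auto simp: mat_of_cols_def unit_vecs_def)

lemma mat_of_cols_mult_unit_vecs:
  fixes A :: "'a::semiring_1 mat"
  assumes "A \<in> carrier_mat nr nc"
  shows "mat_of_cols nr (map (\<lambda>v. A *\<^sub>v v) (unit_vecs nc)) = A"
  using assms by (intro eq_matI) (auto simp: mat_of_cols_def unit_vecs_def)

lemma cgamma_coeff_below: "j < r \<Longrightarrow> cgamma_coeff r n G j = 1"
  by (simp add: cgamma_coeff_def wedge_coeff_def mat_of_cols_unit_vecs)

lemma cgamma_coeff_above:
  fixes G :: "nat \<Rightarrow> 'a::field mat"
  assumes "r \<le> j" and "G (2 * r - 1 - j) \<in> carrier_mat (n j) (n (2 * r - 1 - j))"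
  shows "cgamma_coeff r n G j = det (G (2 * r - 1 - j))"
  using assms by (simp add: cgamma_coeff_def wedge_coeff_def mat_of_cols_mult_unit_vecs)

lemma has_vector_derivative_hcoeff:
  fixes G :: "real \<Rightarrow> nat \<Rightarrow> 'a::real_normed_field mat"
  assumes d: "d = 2 * r - 1" and fam: "smooth_chirality_family d n G" and "adapted d n D z a"
    and j: "r \<le> j" "j \<le> d"
  shows "((\<lambda>s. hcoeff r n D z a (G s) j) has_vector_derivative
           mat_trace (mat_deriv (\<lambda>s. G s (d - j)) t * G t j) * hcoeff r n D z a (G t) j) (at t)"
    and "hcoeff r n D z a (G t) j \<noteq> 0"
proof -
  have jj: "d - (d - j) = j" and j': "d - j \<le> d" using j by auto
  have G: "G s (d - j) \<in> carrier_mat (n j) (n (d - j))" for s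
    using is_chirality_blocks(2)[OF smooth_chirality_family_is_chirality[OF fam] j(2)] .
  have h: "hcoeff r n D z a (G s) j = det (G s (d - j)) / wedge_coeff (n j) (Blist D a j @ z j @ a j)" for s
    using cgamma_coeff_above[where G = "G s", OF j(1) G[of s, unfolded d]] unfolding hcoeff_def d by simp
  have w: "wedge_coeff (n j) (Blist D a j @ z j @ a j) \<noteq> 0"
    using assms(3) j(2) unfolding adapted_def wedge_coeff_def by auto
  note det = smooth_chirality_family_has_vector_derivative_det[OF fam j', of t, unfolded jj]
  show "((\<lambda>s. hcoeff r n D z a (G s) j) has_vector_derivative
      mat_trace (mat_deriv (\<lambda>s. G s (d - j)) t * G t j) * hcoeff r n D z a (G t) j) (at t)"
    unfolding h using has_vector_derivative_divide[OF det(1)] by simp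
  show "hcoeff r n D z a (G t) j \<noteq> 0"
    unfolding h using det(2) w by simp
qed

lemma has_vector_derivative_rho_factor:
  fixes G :: "real \<Rightarrow> nat \<Rightarrow> 'a::real_normed_field mat"
  assumes "d = 2 * r - 1" and "smooth_chirality_family d n G" and "adapted d n D z a" and "j \<le> d"
  shows "((\<lambda>s. if even j then hcoeff r n D z a (G s) j else inverse (hcoeff r n D z a (G s) j))
           has_vector_derivative
           (if r \<le> j then (-1) ^ j * mat_trace (mat_deriv (\<lambda>s. G s (d - j)) t * G t j) else 0) *
           (if even j then hcoeff r n D z a (G t) j else inverse (hcoeff r n D z a (G t) j))) (at t)"
proof (cases "r \<le> j")
  case False
  then have "hcoeff r n D z a (G s) j = hcoeff r n D z a (G t) j" for s
    by (simp add: hcoeff_def cgamma_coeff_below)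
  then have "(\<lambda>s. if even j then hcoeff r n D z a (G s) j else inverse (hcoeff r n D z a (G s) j))
      = (\<lambda>s. if even j then hcoeff r n D z a (G t) j else inverse (hcoeff r n D z a (G t) j))"
    by metis
  then show ?thesis
    using False by simp
next
  case True
  note h = has_vector_derivative_hcoeff[OF assms(1-3) True assms(4)]
  show ?thesis
    using True h has_vector_derivative_inverse_logarithmic[OF h] by auto
qed

theorem proposition4p5:
  fixes r d :: nat and n :: "nat \<Rightarrow> nat" and D :: "nat \<Rightarrow> 'a::real_normed_field mat"
    and G :: "real \<Rightarrow> nat \<Rightarrow> 'a mat"
  assumes "r \<ge> 1" and "d = 2 * r - 1"
    and "is_complex d n D"
    and "smooth_chirality_family d n G"
    and "adapted d n D z a"
  shows "((\<lambda>s. rho_coord r n D z a (G s)) has_vector_derivative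
           (1 / 2 * supertrace_dot d (G t) (\<lambda>j. mat_deriv (\<lambda>s. G s j) t)) * rho_coord r n D z a (G t))
         (at t)"
proof -
  let ?T = "\<lambda>j. mat_trace (mat_deriv (\<lambda>s. G s (d - j)) t * G t j)"
  define \<phi> where "\<phi> j s = (if even j then hcoeff r n D z a (G s) j else inverse (hcoeff r n D z a (G s) j))"
    for j s
  define \<sigma> where "\<sigma> = (-1 :: 'a) powi (R_exp r n + N_exp d a)"
  have rho: "rho_coord r n D z a (G s) = \<sigma> * (\<Prod>j\<le>d. \<phi> j s)" for s
    unfolding rho_coord_def \<phi>_def \<sigma>_def assms(2) ..
  have "((\<lambda>s. \<Prod>j\<le>d. \<phi> j s) has_vector_derivative
      (\<Sum>j\<le>d. if r \<le> j then (-1) ^ j * ?T j else 0) * (\<Prod>j\<le>d. \<phi> j t)) (at t)"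
    unfolding \<phi>_def using has_vector_derivative_rho_factor[OF assms(2,4,5)]
    by (intro has_vector_derivative_prod_logarithmic) auto
  moreover have "(\<Sum>j\<le>d. if r \<le> j then (-1) ^ j * ?T j else 0) = (\<Sum>j=r..d. (-1) ^ j * ?T j)"
    by (intro sum.mono_neutral_cong_right) auto
  ultimately have "((\<lambda>s. \<Prod>j\<le>d. \<phi> j s) has_vector_derivative
      (\<Sum>j=r..d. (-1) ^ j * ?T j) * (\<Prod>j\<le>d. \<phi> j t)) (at t)"
    by (simp only:)
  then have "((\<lambda>s. \<sigma> * (\<Prod>j\<le>d. \<phi> j s)) has_vector_derivative
      (\<Sum>j=r..d. (-1) ^ j * ?T j) * (\<sigma> * (\<Prod>j\<le>d. \<phi> j t))) (at t)"
    by (rule has_vector_derivative_eq_rhs[OF has_vector_derivative_mult_right]) (rule mult.left_commute)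
  moreover have "1 / 2 * supertrace_dot d (G t) (\<lambda>j. mat_deriv (\<lambda>s. G s j) t) = (\<Sum>j=r..d. (-1) ^ j * ?T j)"
    unfolding supertrace_dot_eq_twice_upper_half[OF assms(1,2,4)] by simp
  ultimately show ?thesis
    unfolding rho by (simp only:)
qed

end
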